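(* Let $r\geq1$ and let $\mathbf a=(a_1,\ldots,a_r)$ be positive integers with $\gcd(a_1,\ldots,a_r)=1$, and let $D=\operatorname{lcm}(a_1,\ldots,a_r)$. Then the Frobenius number satisfies $$F(a_1,\ldots,a_r)\leq D(r-1)-a_1-\cdots-a_r.$$
   Context: The Frobenius number $F(a_1,\ldots,a_r)$ is the largest integer $n$ that cannot be written as $a_1x_1+\cdots+a_rx_r$ with integers $x_1,\ldots,x_r\geq 0$. *)

theory Defs
  imports Main
begin

definition representable :: "nat list \<Rightarrow> int \<Rightarrow> bool" where
  "representable a n \<longleftrightarrow>
     (\<exists>x :: nat \<Rightarrow> nat. n = (\<Sum>i<length a. int (a ! i) * int (x i)))"

definition frobenius :: "nat list \<Rightarrow> int" where
  "frobenius a = (GREATEST n :: int. \<not> representable a n)"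

end

theory Submission
  imports Defs
begin

text \<open>Let \<open>D\<close> be any common multiple of the \<open>a\<^sub>i\<close> and write
  \<open>d\<^sub>i = D / a\<^sub>i\<close>. By Bezout every integer \<open>n\<close> is an integer combination
  \<open>\<Sum> a\<^sub>i y\<^sub>i\<close>. Since \<open>a\<^sub>i d\<^sub>i = D = a\<^sub>1 d\<^sub>1\<close>, multiples of \<open>d\<^sub>i\<close> can be moved
  from \<open>y\<^sub>i\<close> to \<open>y\<^sub>1\<close>, so we may assume \<open>0 \<le> y\<^sub>i < d\<^sub>i\<close> for \<open>i \<ge> 2\<close>. Then
  \<open>\<Sum>\<^sub>i\<^sub>\<ge>\<^sub>2 a\<^sub>i y\<^sub>i \<le> (r - 1) D - \<Sum>\<^sub>i\<^sub>\<ge>\<^sub>2 a\<^sub>i\<close>, so if \<open>n > (r - 1) D - \<Sum> a\<^sub>i\<close>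
  then \<open>a\<^sub>1 y\<^sub>1 > - a\<^sub>1\<close>, i.e. \<open>y\<^sub>1 \<ge> 0\<close>, and \<open>n\<close> is representable.\<close>

lemma Greatest_int_le:
  fixes P :: "int \<Rightarrow> bool"
  assumes "P k" and bounded: "\<And>n. P n \<Longrightarrow> n \<le> B"
  shows "(GREATEST n. P n) \<le> B"
proof -
  let ?S = "{n. P n \<and> k \<le> n}"
  have "?S \<subseteq> {k..B}" using bounded by auto
  then have fin: "finite ?S" by (rule finite_subset) simp
  have "k \<in> ?S" using \<open>P k\<close> by simp
  then have max_in: "Max ?S \<in> ?S" using fin Max_in by blast
  show ?thesis
  proof (rule GreatestI2_order)
    show "P (Max ?S)" using max_in by simp
    show "n \<le> Max ?S" if "P n" for n
      using that fin max_in by (cases "k \<le> n") auto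
  qed (rule bounded)
qed

lemma Gcd_list_bezout:
  "\<exists>y :: nat \<Rightarrow> int. int (Gcd (set a)) = (\<Sum>i<length a. int (a ! i) * y i)"
proof (induction a)
  case Nil
  then show ?case by simp
next
  case (Cons x xs)
  then obtain y where y: "int (Gcd (set xs)) = (\<Sum>i<length xs. int (xs ! i) * y i)"
    by blast
  obtain u v where uv: "u * int x + v * int (Gcd (set xs)) = gcd (int x) (int (Gcd (set xs)))"
    using bezout_int by blast
  let ?y = "\<lambda>i. case i of 0 \<Rightarrow> u | Suc j \<Rightarrow> v * y j"
  have "(\<Sum>i<length (x # xs). int ((x # xs) ! i) * ?y i)
        = int x * u + (\<Sum>i<length xs. int (xs ! i) * (v * y i))"
    unfolding length_Cons sum.lessThan_Suc_shift by simp
  also have "\<dots> = int x * u + v * int (Gcd (set xs))"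
    using y by (simp add: sum_distrib_left algebra_simps)
  also have "\<dots> = int (Gcd (set (x # xs)))"
    using uv by (simp add: algebra_simps)
  finally show ?case by metis
qed

lemma int_combination_if_Gcd_dvd:
  assumes "int (Gcd (set a)) dvd n"
  shows "\<exists>y :: nat \<Rightarrow> int. n = (\<Sum>i<length a. int (a ! i) * y i)"
proof -
  obtain k where k: "n = int (Gcd (set a)) * k" using assms by blast
  obtain y where "int (Gcd (set a)) = (\<Sum>i<length a. int (a ! i) * y i)"
    using Gcd_list_bezout by blast
  then have "n = k * (\<Sum>i<length a. int (a ! i) * y i)"
    unfolding k by simp
  also have "\<dots> = (\<Sum>i<length a. int (a ! i) * (k * y i))"
    by (simp add: sum_distrib_left mult.left_commute)
  finally have "n = (\<Sum>i<length a. int (a ! i) * (k * y i))" .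
  then show ?thesis by (rule exI[of _ "\<lambda>i. k * y i"])
qed

lemma int_combination_reduce:
  fixes c y :: "nat \<Rightarrow> int" and D :: int
  assumes "0 < r" and "D > 0" and "\<And>i. i < r \<Longrightarrow> c i > 0 \<and> c i dvd D"
  obtains z where "(\<Sum>i<r. c i * z i) = (\<Sum>i<r. c i * y i)"
    and "\<And>i. i \<in> {1..<r} \<Longrightarrow> 0 \<le> z i \<and> c i * (z i + 1) \<le> D"
proof -
  define d where "d i = D div c i" for i
  have cd: "c i * d i = D" if "i < r" for i
    using assms(3)[OF that] by (simp add: d_def)
  have d_pos: "d i > 0" if "i < r" for i
    using cd[OF that] assms(2) assms(3)[OF that] by (metis zero_less_mult_pos)
  define z where "z i = (if i = 0 then y 0 + d 0 * (\<Sum>j\<in>{1..<r}. y j div d j) else y i mod d i)" for i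
  have split: "{..<r} = insert 0 {1..<r}" using assms(1) by auto
  have high: "c i * y i = D * (y i div d i) + c i * z i" if "i \<in> {1..<r}" for i
  proof -
    have "y i = d i * (y i div d i) + y i mod d i" by simp
    then have "c i * y i = (c i * d i) * (y i div d i) + c i * (y i mod d i)"
      by (metis distrib_left mult.assoc)
    then show ?thesis using cd[of i] that by (simp add: z_def)
  qed
  have low: "c 0 * z 0 = c 0 * y 0 + D * (\<Sum>j\<in>{1..<r}. y j div d j)"
    using cd[of 0] assms(1) by (simp add: z_def algebra_simps)
  have "(\<Sum>i<r. c i * y i) = c 0 * y 0 + (\<Sum>i\<in>{1..<r}. D * (y i div d i) + c i * z i)"
    unfolding split using high by simp
  also have "\<dots> = (\<Sum>i<r. c i * z i)"
    unfolding split using low by (simp add: sum.distrib sum_distrib_left)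
  finally have "(\<Sum>i<r. c i * z i) = (\<Sum>i<r. c i * y i)" ..
  moreover have "0 \<le> z i \<and> c i * (z i + 1) \<le> D" if "i \<in> {1..<r}" for i
  proof -
    have "z i + 1 \<le> d i" "0 \<le> z i" using d_pos[of i] that
      by (simp_all add: z_def pos_mod_bound add1_zle_eq)
    then show ?thesis using cd[of i] assms(3)[of i] that
      by (metis atLeastLessThan_iff less_imp_le mult_left_mono)
  qed
  ultimately show ?thesis using that by blast
qed

lemma not_representable_negative:
  assumes "n < 0"
  shows "\<not> representable a n"
  using assms unfolding representable_def
  by (metis (no_types, lifting) of_nat_0_le_iff linorder_not_less mult_nonneg_nonneg sum_nonneg)

lemma representable_above_bound:
  fixes a :: "nat list" and D :: nat and n :: int
  assumes "a \<noteq> []" and "D > 0" and "\<forall>x\<in>set a. 0 < x \<and> x dvd D" and "Gcd (set a) = 1"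
    and n_gt: "n > int D * (int (length a) - 1) - (\<Sum>i<length a. int (a ! i))"
  shows "representable a n"
proof -
  let ?r = "length a"
  have split: "{..<?r} = insert 0 {1..<?r}" using assms(1) by auto
  have coeffs: "int (a ! i) > 0 \<and> int (a ! i) dvd int D" if "i < ?r" for i
    using assms(3) that by (simp add: of_nat_dvd_iff)
  obtain y where n_y: "n = (\<Sum>i<?r. int (a ! i) * y i)"
    using int_combination_if_Gcd_dvd[of a n] assms(4) by auto
  obtain z where z_y: "(\<Sum>i<?r. int (a ! i) * z i) = (\<Sum>i<?r. int (a ! i) * y i)"
    and z_high: "\<And>i. i \<in> {1..<?r} \<Longrightarrow> 0 \<le> z i \<and> int (a ! i) * (z i + 1) \<le> int D"
    by (rule int_combination_reduce[of ?r "int D" "\<lambda>i. int (a ! i)" y])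
      (use assms(1,2) coeffs in auto)
  have n_eq: "n = (\<Sum>i<?r. int (a ! i) * z i)" using n_y z_y by simp
  have "(\<Sum>i\<in>{1..<?r}. int (a ! i) * z i) \<le> (\<Sum>i\<in>{1..<?r}. int D - int (a ! i))"
    using z_high by (intro sum_mono) (simp add: algebra_simps)
  also have "\<dots> = int D * (int ?r - 1) - (\<Sum>i\<in>{1..<?r}. int (a ! i))"
    using assms(1) by (simp add: sum_subtractf of_nat_diff Suc_le_eq)
  finally have high_sum: "(\<Sum>i\<in>{1..<?r}. int (a ! i) * z i)
      \<le> int D * (int ?r - 1) - (\<Sum>i\<in>{1..<?r}. int (a ! i))" .
  have split_sum: "(\<Sum>i<?r. f i) = f 0 + (\<Sum>i\<in>{1..<?r}. f i)" for f :: "nat \<Rightarrow> int"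
    unfolding split by simp
  have "int (a ! 0) * (- 1) < int (a ! 0) * z 0"
    using n_gt n_eq high_sum split_sum[of "\<lambda>i. int (a ! i) * z i"] split_sum[of "\<lambda>i. int (a ! i)"]
    by linarith
  moreover have "int (a ! 0) > 0" using coeffs[of 0] assms(1) by simp
  ultimately have "- 1 < z 0"
    by (simp only: mult_less_cancel_left_pos)
  then have "z 0 \<ge> 0" by simp
  then have z_nonneg: "z i \<ge> 0" if "i < ?r" for i
    using z_high that by (cases "i = 0") auto
  have "n = (\<Sum>i<?r. int (a ! i) * int (nat (z i)))"
    unfolding n_eq using z_nonneg by (intro sum.cong) auto
  then show ?thesis unfolding representable_def by (rule exI[of _ "\<lambda>i. nat (z i)"])
qed

theorem proposition5p1:
  fixes a :: "nat list" and r :: nat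
  assumes "length a = r" and "r \<ge> 1"
    and "\<forall>i<r. a ! i > 0"
    and "Gcd (set a) = 1"
  shows "frobenius a \<le> int (Lcm (set a)) * (int r - 1) - (\<Sum>i<r. int (a ! i))"
proof -
  have "a \<noteq> []" using assms(1,2) by auto
  have "\<forall>x\<in>set a. 0 < x" using assms(1,3) by (auto simp: in_set_conv_nth)
  then have "Lcm (set a) > 0" by (metis Lcm_0_iff finite_set gr0I)
  have "\<forall>x\<in>set a. 0 < x \<and> x dvd Lcm (set a)"
    using \<open>\<forall>x\<in>set a. 0 < x\<close> by simp
  then have above: "representable a n"
    if "n > int (Lcm (set a)) * (int r - 1) - (\<Sum>i<r. int (a ! i))" for n
    using representable_above_bound[OF \<open>a \<noteq> []\<close> \<open>Lcm (set a) > 0\<close>] assms(1,4) that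
    by simp
  show ?thesis
    unfolding frobenius_def
  proof (rule Greatest_int_le)
    show "\<not> representable a (-1)" by (simp add: not_representable_negative)
    show "n \<le> int (Lcm (set a)) * (int r - 1) - (\<Sum>i<r. int (a ! i))"
      if "\<not> representable a n" for n
      using above that by (meson leI)
  qed
qed

end
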